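(* Let $n\geq k\geq 3$ be odd integers with $\gcd(n,k-1)=1$. Then there exists a diagonal $\mathrm{M}^0_{\mathbb Z_k\oplus\mathbb Z_n}(n,n;k,k)$.
   Context: Let $(\Gamma,+)$ be an abelian group. A partially filled array is an array in which some cells may be empty. A zero-sum magic partially filled array $\mathrm{M}^0_\Gamma(n,n;k,k)$ is an $n\times n$ partially filled array with entries in $\Gamma$ in which every element of $\Gamma$ appears exactly once, each row and each column contains exactly $k$ filled cells, and the entries of each row and of each column sum to $0_\Gamma$. For an $n\times n$ partially filled array, cell $(i,j)$ belongs to the diagonal $D_r$ if $j-i\equiv r\pmod n$; such an array is diagonal if its nonempty cells are exactly those of $k$ consecutive diagonals (indices mod $n$). $\mathbb Z_N$ is the cyclic group of order $N$. *)

theory Defs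
  imports Main
begin

text \<open>The group Z_a (+) Z_b, realised on the carrier {0..<a} x {0..<b} with
componentwise addition mod a and mod b.  A partially filled n x n array is a
function from row/column indices (< n) to optional group elements (None = empty).\<close>

definition cyc_pair_carrier :: "nat \<Rightarrow> nat \<Rightarrow> (nat \<times> nat) set" where
  "cyc_pair_carrier a b = {0..<a} \<times> {0..<b}"

definition filled_row :: "nat \<Rightarrow> (nat \<Rightarrow> nat \<Rightarrow> (nat \<times> nat) option) \<Rightarrow> nat \<Rightarrow> nat set" where
  "filled_row n A i = {j. j < n \<and> A i j \<noteq> None}"

definition filled_col :: "nat \<Rightarrow> (nat \<Rightarrow> nat \<Rightarrow> (nat \<times> nat) option) \<Rightarrow> nat \<Rightarrow> nat set" where
  "filled_col n A j = {i. i < n \<and> A i j \<noteq> None}"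

definition zero_sum_magic ::
  "nat \<Rightarrow> nat \<Rightarrow> nat \<Rightarrow> nat \<Rightarrow> (nat \<Rightarrow> nat \<Rightarrow> (nat \<times> nat) option) \<Rightarrow> bool" where
  "zero_sum_magic a b n k A \<longleftrightarrow>
     (\<forall>i j. A i j \<noteq> None \<longrightarrow> i < n \<and> j < n) \<and>
     (\<forall>i j g. A i j = Some g \<longrightarrow> g \<in> cyc_pair_carrier a b) \<and>
     (\<forall>g \<in> cyc_pair_carrier a b. \<exists>!p. fst p < n \<and> snd p < n \<and> A (fst p) (snd p) = Some g) \<and>
     (\<forall>i < n. card (filled_row n A i) = k) \<and>
     (\<forall>j < n. card (filled_col n A j) = k) \<and>
     (\<forall>i < n. (\<Sum>j \<in> filled_row n A i. fst (the (A i j))) mod a = 0 \<and>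
              (\<Sum>j \<in> filled_row n A i. snd (the (A i j))) mod b = 0) \<and>
     (\<forall>j < n. (\<Sum>i \<in> filled_col n A j. fst (the (A i j))) mod a = 0 \<and>
              (\<Sum>i \<in> filled_col n A j. snd (the (A i j))) mod b = 0)"

definition diagonal_array :: "nat \<Rightarrow> nat \<Rightarrow> (nat \<Rightarrow> nat \<Rightarrow> (nat \<times> nat) option) \<Rightarrow> bool" where
  "diagonal_array n k A \<longleftrightarrow>
     (\<exists>r < n. \<forall>i < n. \<forall>j < n.
        A i j \<noteq> None \<longleftrightarrow> (\<exists>t < k. (j + n - i) mod n = (r + t) mod n))"

end

theory Submission
  imports Defs "HOL-Number_Theory.Cong"
begin

text \<open>Fill diagonal \<open>D\<^sub>t\<close>, \<open>0 \<le> t < k\<close>, by putting \<open>(t, a\<^sub>t i)\<close> into its cell in row \<open>i\<close>,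
where every multiplier \<open>a\<^sub>t\<close> is a unit of \<open>\<int>\<^sub>n\<close>. Each diagonal then contains every element
of \<open>{t} \<times> \<int>\<^sub>n\<close> exactly once. Every row and column meets each diagonal once, so its first
coordinates sum to \<open>0 + \<dots> + (k-1) \<equiv> 0 (mod k)\<close> for odd \<open>k\<close>; the second coordinates sum to
\<open>i \<Sum> a\<^sub>t\<close> in row \<open>i\<close> and to \<open>j \<Sum> a\<^sub>t - \<Sum> t a\<^sub>t\<close> in column \<open>j\<close>. With \<open>k = 2m+1\<close> the choice
\<open>a\<^sub>t = 1\<close> for \<open>t \<noteq> m\<close> and \<open>a\<^sub>m = (n-1)2m \<equiv> -2m\<close> makes both sums vanish mod \<open>n\<close>, and \<open>-2m\<close> is a unit
exactly because \<open>gcd(n, k-1) = 1\<close>.\<close>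

lemma bij_betw_mult_mod:
  fixes a n :: nat
  assumes "coprime a n"
  shows "bij_betw (\<lambda>i. a * i mod n) {..<n} {..<n}"
proof -
  have inj: "inj_on (\<lambda>i. a * i mod n) {..<n}"
  proof (rule inj_onI)
    fix x y assume "x \<in> {..<n}" "y \<in> {..<n}" "a * x mod n = a * y mod n"
    then show "x = y"
      using cong_mult_lcancel_nat[OF assms] cong_less_modulus_unique_nat
      by (simp add: cong_def[symmetric])
  qed
  then have "(\<lambda>i. a * i mod n) ` {..<n} = {..<n}"
    by (intro endo_inj_surj) auto
  with inj show ?thesis
    by (simp add: bij_betw_def)
qed

lemma dvd_sum_lessThan_odd:
  fixes k :: nat
  assumes "odd k"
  shows "k dvd (\<Sum>t<k. t)"
proof -
  have "(\<Sum>t<k. t) = k * (k - 1) div 2"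
    using Sum_Ico_nat[of 0 k] by (simp add: atLeast0LessThan)
  also have "\<dots> = k * ((k - 1) div 2)"
    using assms by (simp add: div_mult_swap)
  finally show ?thesis
    by simp
qed

lemma dvd_sum_mult_diff:
  fixes a :: "nat \<Rightarrow> nat"
  assumes "k \<le> c" "n dvd (\<Sum>t<k. a t)" "n dvd (\<Sum>t<k. a t * t)"
  shows "n dvd (\<Sum>t<k. a t * (c - t))"
proof -
  have "(\<Sum>t<k. a t * (c - t)) + (\<Sum>t<k. a t * t) = (\<Sum>t<k. a t * (c - t) + a t * t)"
    by (rule sum.distrib[symmetric])
  also have "\<dots> = (\<Sum>t<k. a t * c)"
  proof (rule sum.cong)
    fix t assume "t \<in> {..<k}"
    then have "c - t + t = c"
      using assms(1) by simp
    then show "a t * (c - t) + a t * t = a t * c"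
      by (metis add_mult_distrib2)
  qed simp
  also have "\<dots> = (\<Sum>t<k. a t) * c"
    by (rule sum_distrib_right[symmetric])
  finally have "n dvd (\<Sum>t<k. a t * (c - t)) + (\<Sum>t<k. a t * t)"
    using assms(2) by simp
  then show ?thesis
    using assms(3) by (simp add: dvd_add_left_iff)
qed

definition diag_index :: "nat \<Rightarrow> nat \<Rightarrow> nat \<Rightarrow> nat" where
  "diag_index n i j = (j + n - i) mod n"

lemma diag_index_add_mod: "i < n \<Longrightarrow> t < n \<Longrightarrow> diag_index n i ((i + t) mod n) = t"
  by (auto simp: diag_index_def mod_if)

lemma add_diag_index_mod: "i < n \<Longrightarrow> j < n \<Longrightarrow> (i + diag_index n i j) mod n = j"
  by (auto simp: diag_index_def mod_if)

lemma diag_index_diff_mod: "j < n \<Longrightarrow> t < n \<Longrightarrow> diag_index n ((j + n - t) mod n) j = t"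
  by (auto simp: diag_index_def mod_if)

lemma diff_diag_index_mod: "i < n \<Longrightarrow> j < n \<Longrightarrow> (j + n - diag_index n i j) mod n = i"
  by (auto simp: diag_index_def mod_if)

definition diagonal_fill :: "nat \<Rightarrow> nat \<Rightarrow> (nat \<Rightarrow> nat) \<Rightarrow> nat \<Rightarrow> nat \<Rightarrow> (nat \<times> nat) option" where
  "diagonal_fill n k a i j =
     (if i < n \<and> j < n \<and> diag_index n i j < k
      then Some (diag_index n i j, a (diag_index n i j) * i mod n) else None)"

lemma diagonal_array_diagonal_fill:
  assumes "0 < n"
  shows "diagonal_array n k (diagonal_fill n k a)"
  unfolding diagonal_array_def
proof (intro exI[of _ 0] conjI allI impI)
  fix i j assume "i < n" "j < n"
  have "diag_index n i j < k \<longleftrightarrow> (\<exists>t<k. diag_index n i j = t mod n)"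
  proof
    assume "diag_index n i j < k"
    then show "\<exists>t<k. diag_index n i j = t mod n"
      by (intro exI[of _ "diag_index n i j"]) (simp add: diag_index_def)
  next
    assume "\<exists>t<k. diag_index n i j = t mod n"
    then show "diag_index n i j < k"
      using mod_less_eq_dividend le_less_trans by metis
  qed
  then show "diagonal_fill n k a i j \<noteq> None \<longleftrightarrow> (\<exists>t<k. (j + n - i) mod n = (0 + t) mod n)"
    using \<open>i < n\<close> \<open>j < n\<close> by (simp add: diagonal_fill_def diag_index_def)
qed (use assms in simp)

lemma filled_row_diagonal_fill:
  "filled_row n (diagonal_fill n k a) i = (if i < n then {j. j < n \<and> diag_index n i j < k} else {})"
  by (auto simp: filled_row_def diagonal_fill_def)

lemma filled_col_diagonal_fill:
  "filled_col n (diagonal_fill n k a) j = (if j < n then {i. i < n \<and> diag_index n i j < k} else {})"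
  by (auto simp: filled_col_def diagonal_fill_def)

lemma bij_betw_filled_row:
  assumes "k \<le> n" "i < n"
  shows "bij_betw (\<lambda>t. (i + t) mod n) {..<k} (filled_row n (diagonal_fill n k a) i)"
  by (rule bij_betw_byWitness[where f' = "diag_index n i"])
     (use assms in \<open>auto simp: filled_row_diagonal_fill diag_index_add_mod add_diag_index_mod\<close>)

lemma bij_betw_filled_col:
  assumes "k \<le> n" "j < n"
  shows "bij_betw (\<lambda>t. (j + n - t) mod n) {..<k} (filled_col n (diagonal_fill n k a) j)"
  by (rule bij_betw_byWitness[where f' = "\<lambda>i. diag_index n i j"])
     (use assms in \<open>auto simp: filled_col_diagonal_fill diag_index_diff_mod diff_diag_index_mod\<close>)

lemma sum_filled_row_diagonal_fill:
  assumes "k \<le> n" "i < n"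
  shows "(\<Sum>j \<in> filled_row n (diagonal_fill n k a) i. f (the (diagonal_fill n k a i j)))
           = (\<Sum>t<k. f (t, a t * i mod n))"
  using assms
  by (auto simp: sum.reindex_bij_betw[OF bij_betw_filled_row, symmetric] diagonal_fill_def
                 diag_index_add_mod intro!: sum.cong)

lemma sum_filled_col_diagonal_fill:
  assumes "k \<le> n" "j < n"
  shows "(\<Sum>i \<in> filled_col n (diagonal_fill n k a) j. f (the (diagonal_fill n k a i j)))
           = (\<Sum>t<k. f (t, a t * ((j + n - t) mod n) mod n))"
  using assms
  by (auto simp: sum.reindex_bij_betw[OF bij_betw_filled_col, symmetric] diagonal_fill_def
                 diag_index_diff_mod intro!: sum.cong)

lemma diagonal_fill_entry_unique:
  assumes "k \<le> n" "\<forall>t<k. coprime (a t) n" "g \<in> cyc_pair_carrier k n"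
  shows "\<exists>!p. fst p < n \<and> snd p < n \<and> diagonal_fill n k a (fst p) (snd p) = Some g"
proof -
  obtain t v where g: "g = (t, v)" "t < k" "v < n"
    using assms(3) by (auto simp: cyc_pair_carrier_def)
  have bij: "bij_betw (\<lambda>i. a t * i mod n) {..<n} {..<n}"
    using assms(2) g(2) by (simp add: bij_betw_mult_mod)
  then have "v \<in> (\<lambda>i. a t * i mod n) ` {..<n}"
    using g(3) by (simp add: bij_betw_def)
  then obtain i where i: "i \<in> {..<n}" "a t * i mod n = v"
    by (rule imageE) simp
  have cell: "diagonal_fill n k a i ((i + t) mod n) = Some g"
    using assms(1) g i by (simp add: diagonal_fill_def diag_index_add_mod)
  show ?thesis
  proof (rule ex1I[of _ "(i, (i + t) mod n)"])
    show "fst (i, (i + t) mod n) < n \<and> snd (i, (i + t) mod n) < n \<and>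
          diagonal_fill n k a (fst (i, (i + t) mod n)) (snd (i, (i + t) mod n)) = Some g"
      using i(1) cell by simp
  next
    fix p assume p: "fst p < n \<and> snd p < n \<and> diagonal_fill n k a (fst p) (snd p) = Some g"
    then have t: "diag_index n (fst p) (snd p) = t" and v: "a t * fst p mod n = v"
      using g(1) by (auto simp: diagonal_fill_def split: if_splits)
    have "fst p = i"
      using bij_betw_imp_inj_on[OF bij] p i v by (auto intro: inj_onD)
    moreover have "snd p = (fst p + t) mod n"
      using add_diag_index_mod p t by auto
    ultimately show "p = (i, (i + t) mod n)"
      by (simp add: prod_eq_iff)
  qed
qed

lemma row_sum_diagonal_fill_snd:
  assumes "k \<le> n" "i < n" "n dvd (\<Sum>t<k. a t)"
  shows "n dvd (\<Sum>j \<in> filled_row n (diagonal_fill n k a) i. snd (the (diagonal_fill n k a i j)))"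
proof -
  have "[(\<Sum>t<k. a t * i mod n) = (\<Sum>t<k. a t) * i] (mod n)"
    by (simp add: cong_def mod_sum_eq sum_distrib_right)
  moreover have "n dvd (\<Sum>t<k. a t) * i"
    using assms(3) by simp
  ultimately show ?thesis
    using assms(1,2) by (simp add: sum_filled_row_diagonal_fill cong_dvd_iff)
qed

lemma col_sum_diagonal_fill_snd:
  assumes "k \<le> n" "j < n" "n dvd (\<Sum>t<k. a t)" "n dvd (\<Sum>t<k. a t * t)"
  shows "n dvd (\<Sum>i \<in> filled_col n (diagonal_fill n k a) j. snd (the (diagonal_fill n k a i j)))"
proof -
  have "[(\<Sum>t<k. a t * ((j + n - t) mod n) mod n) = (\<Sum>t<k. a t * (j + n - t))] (mod n)"
    by (intro cong_sum) (simp add: cong_def mod_mult_right_eq)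
  moreover have "n dvd (\<Sum>t<k. a t * (j + n - t))"
    using assms(1,3,4) by (intro dvd_sum_mult_diff) simp_all
  ultimately show ?thesis
    using assms(1,2) by (simp add: sum_filled_col_diagonal_fill cong_dvd_iff)
qed

lemma zero_sum_magic_diagonal_fill:
  assumes "odd k" "k \<le> n" "\<forall>t<k. coprime (a t) n"
    and "n dvd (\<Sum>t<k. a t)" "n dvd (\<Sum>t<k. a t * t)"
  shows "zero_sum_magic k n n k (diagonal_fill n k a)"
  unfolding zero_sum_magic_def
proof (intro conjI ballI allI impI)
  fix i j assume "diagonal_fill n k a i j \<noteq> None"
  then show "i < n" "j < n"
    by (auto simp: diagonal_fill_def split: if_splits)
next
  fix i j g assume "diagonal_fill n k a i j = Some g"
  then show "g \<in> cyc_pair_carrier k n"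
    using assms(2) by (auto simp: diagonal_fill_def cyc_pair_carrier_def split: if_splits)
next
  fix g assume "g \<in> cyc_pair_carrier k n"
  then show "\<exists>!p. fst p < n \<and> snd p < n \<and> diagonal_fill n k a (fst p) (snd p) = Some g"
    by (rule diagonal_fill_entry_unique[OF assms(2,3)])
next
  fix i assume "i < n"
  then show "card (filled_row n (diagonal_fill n k a) i) = k"
    using bij_betw_same_card[OF bij_betw_filled_row[OF assms(2)]] by simp
  show "(\<Sum>j \<in> filled_row n (diagonal_fill n k a) i. fst (the (diagonal_fill n k a i j))) mod k = 0"
    using \<open>i < n\<close> assms(1,2) dvd_sum_lessThan_odd by (simp add: sum_filled_row_diagonal_fill)
  show "(\<Sum>j \<in> filled_row n (diagonal_fill n k a) i. snd (the (diagonal_fill n k a i j))) mod n = 0"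
    using \<open>i < n\<close> assms(2,4) by (simp add: row_sum_diagonal_fill_snd)
next
  fix j assume "j < n"
  then show "card (filled_col n (diagonal_fill n k a) j) = k"
    using bij_betw_same_card[OF bij_betw_filled_col[OF assms(2)]] by simp
  show "(\<Sum>i \<in> filled_col n (diagonal_fill n k a) j. fst (the (diagonal_fill n k a i j))) mod k = 0"
    using \<open>j < n\<close> assms(1,2) dvd_sum_lessThan_odd by (simp add: sum_filled_col_diagonal_fill)
  show "(\<Sum>i \<in> filled_col n (diagonal_fill n k a) j. snd (the (diagonal_fill n k a i j))) mod n = 0"
    using \<open>j < n\<close> assms(2,4,5) by (simp add: col_sum_diagonal_fill_snd)
qed

definition balancing_multiplier :: "nat \<Rightarrow> nat \<Rightarrow> nat \<Rightarrow> nat" where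
  "balancing_multiplier n m t = (if t = m then (n - 1) * (2 * m) else 1)"

lemma coprime_balancing_multiplier:
  assumes "0 < n" "coprime n (2 * m)"
  shows "coprime (balancing_multiplier n m t) n"
  using assms coprime_diff_one_left_nat[of n]
  by (simp add: balancing_multiplier_def coprime_commute)

lemma sum_balancing_multiplier:
  assumes "0 < n"
  shows "(\<Sum>t<2 * m + 1. balancing_multiplier n m t) = n * (2 * m)"
proof -
  have "(\<Sum>t<2 * m + 1. balancing_multiplier n m t)
          = (n - 1) * (2 * m) + (\<Sum>t \<in> {..<2 * m + 1} - {m}. 1)"
    by (simp add: balancing_multiplier_def sum.remove[of _ m])
  also have "\<dots> = n * (2 * m)"
    using assms by (cases n) simp_all
  finally show ?thesis .
qed

lemma sum_balancing_multiplier_mult: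
  assumes "0 < n"
  shows "(\<Sum>t<2 * m + 1. balancing_multiplier n m t * t) = n * (2 * m) * m"
proof -
  have "(\<Sum>t<2 * m + 1. balancing_multiplier n m t * t)
          = (n - 1) * (2 * m) * m + (\<Sum>t \<in> {..<2 * m + 1} - {m}. t)"
    by (simp add: balancing_multiplier_def sum.remove[of _ m] del: sum.lessThan_Suc)
  also have "(\<Sum>t \<in> {..<2 * m + 1} - {m}. t) = (\<Sum>t<2 * m + 1. t) - m"
    by (simp add: sum_diff1_nat del: sum.lessThan_Suc)
  also have "(\<Sum>t<2 * m + 1. t) = (2 * m + 1) * m"
    using Sum_Ico_nat[of 0 "2 * m + 1"] by (simp add: atLeast0LessThan)
  finally show ?thesis
    using assms by (cases n) (simp_all add: algebra_simps)
qed

theorem mainTheorem10: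
  fixes n k :: nat
  assumes "odd n" and "odd k" and "3 \<le> k" and "k \<le> n" and "coprime n (k - 1)"
  shows "\<exists>A. zero_sum_magic k n n k A \<and> diagonal_array n k A"
proof -
  obtain m where k: "k = 2 * m + 1"
    using \<open>odd k\<close> oddE by blast
  have "0 < n"
    using \<open>k \<le> n\<close> k by simp
  have "coprime n (2 * m)"
    using \<open>coprime n (k - 1)\<close> k by simp
  let ?a = "balancing_multiplier n m"
  let ?A = "diagonal_fill n k ?a"
  have "(\<Sum>t<k. ?a t) = n * (2 * m)"
    unfolding k using \<open>0 < n\<close> by (rule sum_balancing_multiplier)
  moreover have "(\<Sum>t<k. ?a t * t) = n * (2 * m * m)"
    unfolding k using sum_balancing_multiplier_mult[OF \<open>0 < n\<close>] by (simp only: mult.assoc)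
  ultimately have "zero_sum_magic k n n k ?A"
    using \<open>odd k\<close> \<open>k \<le> n\<close> coprime_balancing_multiplier[OF \<open>0 < n\<close> \<open>coprime n (2 * m)\<close>]
    by (intro zero_sum_magic_diagonal_fill) simp_all
  moreover have "diagonal_array n k ?A"
    using \<open>0 < n\<close> by (rule diagonal_array_diagonal_fill)
  ultimately show ?thesis
    by blast
qed

end
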